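(* Let $t$, $k$ and $q$ be integers such that $q \ge 0$, $0 \le t < k$ and $t \equiv k \pmod 2$, and let $s \in [0,t+1]$ be the unique integer satisfying $s \equiv q + \frac{k-t-2}{2} \pmod{t+2}$. Then for any integer $n$ such that \[n \ge \max\left\{k,\ \frac{1}{2(t+2)}k^2 + \frac{q-s}{t+2}k - \frac{t}{2} + s\right\}\] and any function $f:[n]\to \{-1,1\}$ with $|f([n])| \le q$, there is a $k$-block $B \subseteq [n]$ with $|f(B)| \le t$.
   Context: $[n]=\{1,\dots,n\}$. For a function $f$ defined on a set $X$ with integer values and $Y\subseteq X$, $f(Y)=\sum_{y\in Y} f(y)$. A $k$-block is a set of $k$ consecutive integers. *)

theory Defs
  imports Complex_Main "HOL-Number_Theory.Cong"
begin

definition block :: "int \<Rightarrow> int \<Rightarrow> int set" where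
  "block k a = {a..a + k - 1}"

end

theory Submission
  imports Defs
begin

text \<open>If no \<open>k\<close>-block has \<open>|f(B)| \<le> t\<close>, then, since \<open>f(B) \<equiv> k \<equiv> t (mod 2)\<close>, every block has
  \<open>|f(B)| \<ge> t + 2\<close>. Shifting a block by one changes its sum by at most 2, so all block sums have
  the same sign, say positive. Tiling \<open>[n]\<close> by blocks then bounds \<open>f([n])\<close> from below, and
  writing \<open>k = t + 2 + 2d\<close> and \<open>q = (t + 2)M - d + s\<close>, the hypothesis on \<open>n\<close> reads
  \<open>n \<ge> kM + d + 1 + s\<close>, which is exactly what pushes this bound above \<open>q\<close>.\<close>

lemma sum_int_interval_split:
  fixes g :: "int \<Rightarrow> 'a::comm_monoid_add"
  assumes "a \<le> b + 1" "b \<le> c"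
  shows "sum g {a..c} = sum g {a..b} + sum g {b+1..c}"
proof -
  have "{a..c} = {a..b} \<union> {b+1..c}" using assms by auto
  then show ?thesis by (simp add: sum.union_disjoint)
qed

lemma block_subset_interval_iff:
  assumes "k \<ge> 1"
  shows "block k a \<subseteq> {lo..hi} \<longleftrightarrow> lo \<le> a \<and> a + k - 1 \<le> hi"
  using assms by (auto simp: block_def)

lemma card_block: "k \<ge> 0 \<Longrightarrow> int (card (block k a)) = k"
  by (simp add: block_def)

lemma sum_block_shift:
  fixes g :: "int \<Rightarrow> 'a::ab_group_add"
  assumes "k \<ge> 1"
  shows "sum g (block k (a + 1)) = sum g (block k a) - g a + g (a + k)"
proof -
  have "sum g {a..a+k} = g a + sum g {a+1..a+k}"
    using sum_int_interval_split[of a a "a + k" g] assms by simp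
  moreover have "sum g {a..a+k} = sum g {a..a+k-1} + g (a + k)"
    using sum_int_interval_split[of a "a + k - 1" "a + k" g] assms by simp
  ultimately show ?thesis by (simp add: block_def algebra_simps)
qed

lemma abs_sum_le_card:
  fixes g :: "'a \<Rightarrow> int"
  assumes "\<forall>i\<in>A. \<bar>g i\<bar> \<le> 1"
  shows "\<bar>sum g A\<bar> \<le> int (card A)"
proof -
  have "(\<Sum>i\<in>A. \<bar>g i\<bar>) \<le> of_nat (card A) * 1"
    using assms by (intro sum_bounded_above) auto
  then show ?thesis using sum_abs[of g A] by linarith
qed

lemma even_sum_pm1_minus_card:
  fixes g :: "'a \<Rightarrow> int"
  assumes "\<forall>i\<in>A. g i \<in> {-1, 1}"
  shows "even (sum g A - int (card A))"
proof -
  have "sum g A - int (card A) = (\<Sum>i\<in>A. g i - 1)"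
    by (simp add: sum_subtractf)
  also have "even \<dots>" using assms by (intro dvd_sum) auto
  finally show ?thesis .
qed

lemma abs_sum_pm1_parity_gap:
  fixes g :: "'a \<Rightarrow> int"
  assumes "\<forall>i\<in>A. g i \<in> {-1, 1}" "even (int (card A) - t)" "t < \<bar>sum g A\<bar>"
  shows "t + 2 \<le> \<bar>sum g A\<bar>"
  using even_sum_pm1_minus_card[OF assms(1)] assms(2,3) by presburger

lemma lower_bound_persists:
  fixes S :: "int \<Rightarrow> int"
  assumes step: "\<And>a. lo \<le> a \<Longrightarrow> a < hi \<Longrightarrow> \<bar>S (a + 1) - S a\<bar> < 2 * c"
    and gap: "\<And>a. lo \<le> a \<Longrightarrow> a \<le> hi \<Longrightarrow> c \<le> \<bar>S a\<bar>"
    and start: "c \<le> S lo"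
    and "lo \<le> a" "a \<le> hi"
  shows "c \<le> S a"
proof -
  have "a \<le> hi \<longrightarrow> c \<le> S a" using \<open>lo \<le> a\<close>
  proof (induction a rule: int_ge_induct)
    case base
    then show ?case using start by simp
  next
    case (step a)
    show ?case
    proof
      assume "a + 1 \<le> hi"
      then have "c \<le> S a" "\<bar>S (a + 1) - S a\<bar> < 2 * c" "c \<le> \<bar>S (a + 1)\<bar>"
        using step.IH step.hyps assms(1,2) by auto
      then show "c \<le> S (a + 1)" by linarith
    qed
  qed
  with \<open>a \<le> hi\<close> show ?thesis by simp
qed

lemma block_sums_ge_of_first:
  fixes g :: "int \<Rightarrow> int"
  assumes k: "k \<ge> 1" and c: "c \<ge> 2"
    and g: "\<forall>i\<in>{1..n}. g i \<in> {-1, 1}"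
    and gap: "\<forall>a. block k a \<subseteq> {1..n} \<longrightarrow> c \<le> \<bar>sum g (block k a)\<bar>"
    and first: "c \<le> sum g (block k 1)"
    and a: "block k a \<subseteq> {1..n}"
  shows "c \<le> sum g (block k a)"
proof (rule lower_bound_persists[where S = "\<lambda>a. sum g (block k a)" and lo = 1 and hi = "n - k + 1"])
  fix b assume "1 \<le> b" "b < n - k + 1"
  then have "g b \<in> {-1, 1}" "g (b + k) \<in> {-1, 1}" using g k by auto
  then show "\<bar>sum g (block k (b + 1)) - sum g (block k b)\<bar> < 2 * c"
    using sum_block_shift[OF k, of g b] c by auto
next
  fix b assume "1 \<le> b" "b \<le> n - k + 1"
  then show "c \<le> \<bar>sum g (block k b)\<bar>"
    using gap block_subset_interval_iff[OF k] by simp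
qed (use first a block_subset_interval_iff[OF k] in auto)

lemma prefix_sum_ge_of_block_sums_ge:
  fixes g :: "int \<Rightarrow> int"
  assumes k: "k \<ge> 1"
    and blocks: "\<forall>a. block k a \<subseteq> {1..n} \<longrightarrow> c \<le> sum g (block k a)"
    and "0 \<le> m" "m * k \<le> n"
  shows "m * c \<le> sum g {1..m * k}"
proof -
  have "m * k \<le> n \<longrightarrow> m * c \<le> sum g {1..m * k}" using \<open>0 \<le> m\<close>
  proof (induction m rule: int_ge_induct)
    case base
    then show ?case by simp
  next
    case (step m)
    show ?case
    proof
      assume le: "(m + 1) * k \<le> n"
      have "0 \<le> m * k" using step.hyps k by simp
      then have "sum g {1..(m + 1) * k} = sum g {1..m * k} + sum g (block k (m * k + 1))"
        using sum_int_interval_split[of 1 "m * k" "(m + 1) * k" g] k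
        by (simp add: block_def algebra_simps)
      moreover have "c \<le> sum g (block k (m * k + 1))"
        using blocks block_subset_interval_iff[OF k] le \<open>0 \<le> m * k\<close>
        by (simp add: algebra_simps)
      ultimately show "(m + 1) * c \<le> sum g {1..(m + 1) * k}"
        using step.IH le k step.hyps by (simp add: algebra_simps mult_right_mono)
    qed
  qed
  with assms show ?thesis by simp
qed

text \<open>Cut \<open>[1..n]\<close> into \<open>n div k\<close> blocks and a remainder of length \<open>r = n mod k\<close>; the remainder
  is bounded below either termwise, or as the last block minus its first \<open>k - r\<close> terms.\<close>
lemma sum_lower_bounds_of_block_sums_ge:
  fixes g :: "int \<Rightarrow> int"
  assumes k: "k \<ge> 1" and nk: "n \<ge> k"
    and g: "\<forall>i\<in>{1..n}. g i \<in> {-1, 1}"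
    and blocks: "\<forall>a. block k a \<subseteq> {1..n} \<longrightarrow> c \<le> sum g (block k a)"
  shows "(n div k) * c - n mod k \<le> sum g {1..n}"
    and "(n div k) * c + n mod k - (k - c) \<le> sum g {1..n}"
proof -
  define m r where "m = n div k" and "r = n mod k"
  have n: "n = m * k + r" and r: "0 \<le> r" "r < k" using k by (auto simp: m_def r_def)
  have m: "0 \<le> m" using k nk by (simp add: m_def pos_imp_zdiv_nonneg_iff)
  then have mk: "0 \<le> m * k" using k by simp
  have split: "sum g {1..n} = sum g {1..m * k} + sum g {m * k + 1..n}"
    using mk n r by (intro sum_int_interval_split) auto
  have prefix: "m * c \<le> sum g {1..m * k}"
    using prefix_sum_ge_of_block_sums_ge[OF k blocks m] n r by simp
  have unit: "\<forall>i\<in>A. \<bar>g i\<bar> \<le> 1" if "A \<subseteq> {1..n}" for A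
    using g that by fastforce
  have "\<bar>sum g {m * k + 1..n}\<bar> \<le> int (card {m * k + 1..n})"
    using mk by (intro abs_sum_le_card unit) auto
  then have "\<bar>sum g {m * k + 1..n}\<bar> \<le> r" using n r by simp
  then show "(n div k) * c - n mod k \<le> sum g {1..n}"
    using split prefix by (simp add: m_def r_def)
  have last: "sum g {n - k + 1..n} = sum g {n - k + 1..m * k} + sum g {m * k + 1..n}"
    using n r by (intro sum_int_interval_split) auto
  have "\<bar>sum g {n - k + 1..m * k}\<bar> \<le> int (card {n - k + 1..m * k})"
    using nk n r by (intro abs_sum_le_card unit) auto
  then have "\<bar>sum g {n - k + 1..m * k}\<bar> \<le> k - r" using n r by simp
  moreover have "c \<le> sum g {n - k + 1..n}"
    using blocks[rule_format, of "n - k + 1"] nk k by (simp add: block_def)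
  ultimately show "(n div k) * c + n mod k - (k - c) \<le> sum g {1..n}"
    using split prefix last by (simp add: m_def r_def)
qed

lemma sum_gt_of_block_sums_ge:
  fixes g :: "int \<Rightarrow> int"
  assumes c: "c \<ge> 2" and k: "k = c + 2 * d" "d \<ge> 0"
    and q: "q = c * M - d + s" "0 \<le> s" "s \<le> c - 1"
    and n: "n \<ge> k" "n \<ge> k * M + d + 1 + s"
    and g: "\<forall>i\<in>{1..n}. g i \<in> {-1, 1}"
    and blocks: "\<forall>a. block k a \<subseteq> {1..n} \<longrightarrow> c \<le> sum g (block k a)"
  shows "q + 1 \<le> sum g {1..n}"
proof -
  define m r where "m = n div k" and "r = n mod k"
  have "k \<ge> 1" using c k by simp
  then have nmr: "n = m * k + r" and r: "0 \<le> r" "r < k" by (auto simp: m_def r_def)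
  note bounds = sum_lower_bounds_of_block_sums_ge[OF \<open>k \<ge> 1\<close> n(1) g blocks, folded m_def r_def]
  have "M \<le> m"
  proof (rule ccontr)
    assume "\<not> M \<le> m"
    then have "(m + 1) * k \<le> M * k" using c k by (intro mult_right_mono) auto
    then show False using nmr r n q(2) k by (simp add: algebra_simps)
  qed
  then consider "m = M" | "M + 1 \<le> m" by linarith
  then show ?thesis
  proof cases
    case 1
    then show ?thesis using bounds(2) nmr n(2) q k by (simp add: algebra_simps)
  next
    case 2
    \<comment> \<open>averaging the two bounds gives \<open>m c - d\<close>\<close>
    then have "(M + 1) * c \<le> m * c" using c by (intro mult_right_mono) auto
    then show ?thesis using bounds q k by (simp add: algebra_simps)
  qed
qed

lemma abs_sum_gt_of_abs_block_sums_ge: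
  fixes g :: "int \<Rightarrow> int"
  assumes c: "c \<ge> 2" and k: "k = c + 2 * d" "d \<ge> 0"
    and q: "q = c * M - d + s" "0 \<le> s" "s \<le> c - 1"
    and n: "n \<ge> k" "n \<ge> k * M + d + 1 + s"
    and g: "\<forall>i\<in>{1..n}. g i \<in> {-1, 1}"
    and gap: "\<forall>a. block k a \<subseteq> {1..n} \<longrightarrow> c \<le> \<bar>sum g (block k a)\<bar>"
  shows "q + 1 \<le> \<bar>sum g {1..n}\<bar>"
proof -
  have "k \<ge> 1" using c k by simp
  have first: "block k 1 \<subseteq> {1..n}" using n(1) by (simp add: block_def)
  show ?thesis
  proof (cases "c \<le> sum g (block k 1)")
    case True
    then have "\<forall>a. block k a \<subseteq> {1..n} \<longrightarrow> c \<le> sum g (block k a)"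
      using block_sums_ge_of_first[OF \<open>k \<ge> 1\<close> c g gap] by blast
    then show ?thesis using sum_gt_of_block_sums_ge[OF c k q n g] by simp
  next
    case False
    define h where "h i = - g i" for i
    have h: "\<forall>i\<in>{1..n}. h i \<in> {-1, 1}" using g by (auto simp: h_def)
    have sum_h: "sum h A = - sum g A" for A by (simp add: h_def sum_negf)
    have "c \<le> sum h (block k 1)" using False gap first by (force simp: sum_h)
    then have "\<forall>a. block k a \<subseteq> {1..n} \<longrightarrow> c \<le> sum h (block k a)"
      using block_sums_ge_of_first[OF \<open>k \<ge> 1\<close> c h] gap by (simp add: sum_h)
    then show ?thesis using sum_gt_of_block_sums_ge[OF c k q n h] by (simp add: sum_h)
  qed
qed

lemma threshold_eq:
  fixes t d M s :: real
  assumes "t + 2 \<noteq> 0"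
  shows "(t + 2 + 2 * d)^2 / (2 * (t + 2)) + ((t + 2) * M - d) / (t + 2) * (t + 2 + 2 * d)
          - t / 2 + s = (t + 2 + 2 * d) * M + d + 1 + s"
proof -
  have "(t + 2 + 2 * d)^2 / (2 * (t + 2)) = (t + 2) / 2 + 2 * d + 2 * d^2 / (t + 2)"
    using assms by (simp add: field_simps power2_eq_square)
  moreover have "((t + 2) * M - d) / (t + 2) * (t + 2 + 2 * d)
      = (t + 2 + 2 * d) * M - d - 2 * d^2 / (t + 2)"
    using assms by (simp add: field_simps power2_eq_square)
  ultimately show ?thesis by (simp only:) (simp add: field_simps)
qed

theorem theorem2p2:
  fixes t k q s n :: int and f :: "int \<Rightarrow> int"
  assumes "q \<ge> 0" and "0 \<le> t" and "t < k" and "[t = k] (mod 2)"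
    and "0 \<le> s" and "s \<le> t + 1"
    and "[s = q + (k - t - 2) div 2] (mod (t + 2))"
    and "n \<ge> k"
    and "real_of_int n \<ge> (real_of_int k)^2 / (2 * real_of_int (t + 2))
          + real_of_int (q - s) / real_of_int (t + 2) * real_of_int k
          - real_of_int t / 2 + real_of_int s"
    and "\<forall>i\<in>{1..n}. f i \<in> {-1, 1}"
    and "\<bar>sum f {1..n}\<bar> \<le> q"
  shows "\<exists>a. block k a \<subseteq> {1..n} \<and> \<bar>sum f (block k a)\<bar> \<le> t"
proof (rule ccontr)
  assume no_small_block: "\<not> ?thesis"
  define c d where "c = t + 2" and "d = (k - t - 2) div 2"
  have k_parity: "even (k - t)"
    using \<open>[t = k] (mod 2)\<close> by (simp add: cong_iff_dvd_diff dvd_diff_commute)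
  then have k: "k = c + 2 * d" "0 \<le> d"
    using \<open>t < k\<close> unfolding c_def d_def by presburger+
  have "c dvd q + d - s"
    using \<open>[s = q + (k - t - 2) div 2] (mod (t + 2))\<close>
    unfolding c_def d_def by (simp add: cong_iff_dvd_diff dvd_diff_commute)
  then obtain M where "q + d - s = c * M" by blast
  then have q: "q = c * M - d + s" by simp
  have "real_of_int (k * M + d + 1 + s) \<le> real_of_int n"
    using threshold_eq[of "real_of_int t" "real_of_int d" "real_of_int M" "real_of_int s"]
      \<open>0 \<le> t\<close> assms(9) unfolding k q c_def by simp
  then have n: "k * M + d + 1 + s \<le> n" by linarith
  have "\<forall>a. block k a \<subseteq> {1..n} \<longrightarrow> c \<le> \<bar>sum f (block k a)\<bar>"
  proof (intro allI impI)
    fix a assume a: "block k a \<subseteq> {1..n}"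
    have "\<forall>i\<in>block k a. f i \<in> {-1, 1}" using assms(10) a by blast
    moreover have "even (int (card (block k a)) - t)" 
      using card_block[of k a] k_parity \<open>0 \<le> t\<close> \<open>t < k\<close> by simp
    moreover have "t < \<bar>sum f (block k a)\<bar>" using no_small_block a by auto
    ultimately show "c \<le> \<bar>sum f (block k a)\<bar>" unfolding c_def by (rule abs_sum_pm1_parity_gap)
  qed
  then have "q + 1 \<le> \<bar>sum f {1..n}\<bar>"
    using abs_sum_gt_of_abs_block_sums_ge[OF _ k q \<open>0 \<le> s\<close> _ \<open>n \<ge> k\<close> n assms(10)]
      \<open>0 \<le> t\<close> \<open>s \<le> t + 1\<close> unfolding c_def by simp
  with assms(11) show False by simp
qed

end
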